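(* Let $0<c<\Gamma_0$ and $t>0$, and let $\mathcal D=\{(\tau,p):0<\tau<t,\ c<p<\Gamma_0\}$. Let $A$ be the cooperation area and regions II, III, VII as defined in the context. Then: - the maximum of $A$ over the closure (in $\mathcal D$) of region II is attained at $(\tau,p)=\left(\tfrac12 t,\ \sqrt{c\Gamma_0}\right)$; - the maximum over the closure of region III is attained at $\left(\frac{\Gamma_0}{\Gamma_0+c}t,\ \frac{2\Gamma_0 c}{\Gamma_0+c}\right)$; - the maximum over the closure of region VII is attained at $\left(\frac{\Gamma_0-\sqrt{c\Gamma_0}}{\Gamma_0-c}t,\ \sqrt{c\Gamma_0}\right)$.
   Context: The client utility is linear: $\Gamma(d)=\Gamma_0(1-d)$. For $(\tau,p)\in\mathcal D$ write $s=\tau/t$ and, for $w\in(0,1]$, set $K(w)=1-(1-w)s$. Define $$d_s(w;\tau,p)=1-\frac{cK(w)}{wp},\qquad d_c(w;\tau,p)=1-\frac{p}{\Gamma_0K(w)}.$$ The cooperation area is $$A(\tau,p)=\int_0^1\max\{\min(d_s(w;\tau,p),d_c(w;\tau,p)),0\}\,dw.$$ The regions (subsets of $\mathcal D$) are: - region II: $p^2\ge 4c\Gamma_0 s(1-s)$, $p<\Gamma_0(1-s)+cs$, $p<\sqrt{c\Gamma_0}$, and $s<\tfrac12$; - region III: $p^2\ge 4c\Gamma_0 s(1-s)$, $p<\Gamma_0(1-s)+cs$, $p<\sqrt{c\Gamma_0}$, and $s>\frac{\Gamma_0}{\Gamma_0+c}$; - region VII: $p^2\ge4c\Gamma_0 s(1-s)$,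 $p>\Gamma_0(1-s)+cs$, and $p>\sqrt{c\Gamma_0}$. *)

theory Defs
  imports "HOL-Analysis.Analysis"
begin

definition dom_D :: "real \<Rightarrow> real \<Rightarrow> real \<Rightarrow> (real \<times> real) set" where
  "dom_D c G0 t = {(tau, p). 0 < tau \<and> tau < t \<and> c < p \<and> p < G0}"

definition Kw :: "real \<Rightarrow> real \<Rightarrow> real \<Rightarrow> real" where
  "Kw t tau w = 1 - (1 - w) * (tau / t)"

definition d_s :: "real \<Rightarrow> real \<Rightarrow> real \<Rightarrow> real \<Rightarrow> real \<Rightarrow> real" where
  "d_s c t w tau p = 1 - c * Kw t tau w / (w * p)"

definition d_c :: "real \<Rightarrow> real \<Rightarrow> real \<Rightarrow> real \<Rightarrow> real \<Rightarrow> real" where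
  "d_c G0 t w tau p = 1 - p / (G0 * Kw t tau w)"

text \<open>Cooperation area; the integrand on [0,1] (the value at w = 0 is irrelevant).\<close>
definition coop_area :: "real \<Rightarrow> real \<Rightarrow> real \<Rightarrow> real \<times> real \<Rightarrow> real" where
  "coop_area c G0 t q = (case q of (tau, p) \<Rightarrow>
     integral {0..1} (\<lambda>w. max (min (d_s c t w tau p) (d_c G0 t w tau p)) 0))"

definition region_II :: "real \<Rightarrow> real \<Rightarrow> real \<Rightarrow> (real \<times> real) set" where
  "region_II c G0 t = {(tau, p) \<in> dom_D c G0 t.
     p\<^sup>2 \<ge> 4 * c * G0 * (tau/t) * (1 - tau/t) \<and> p < G0 * (1 - tau/t) + c * (tau/t)
     \<and> p < sqrt (c * G0) \<and> tau/t < 1/2}"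

definition region_III :: "real \<Rightarrow> real \<Rightarrow> real \<Rightarrow> (real \<times> real) set" where
  "region_III c G0 t = {(tau, p) \<in> dom_D c G0 t.
     p\<^sup>2 \<ge> 4 * c * G0 * (tau/t) * (1 - tau/t) \<and> p < G0 * (1 - tau/t) + c * (tau/t)
     \<and> p < sqrt (c * G0) \<and> tau/t > G0 / (G0 + c)}"

definition region_VII :: "real \<Rightarrow> real \<Rightarrow> real \<Rightarrow> (real \<times> real) set" where
  "region_VII c G0 t = {(tau, p) \<in> dom_D c G0 t.
     p\<^sup>2 \<ge> 4 * c * G0 * (tau/t) * (1 - tau/t) \<and> p > G0 * (1 - tau/t) + c * (tau/t)
     \<and> p > sqrt (c * G0)}"

definition closure_in_D :: "real \<Rightarrow> real \<Rightarrow> real \<Rightarrow> (real \<times> real) set \<Rightarrow> (real \<times> real) set" where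
  "closure_in_D c G0 t R = closure R \<inter> dom_D c G0 t"

definition max_attained_at :: "(real \<times> real \<Rightarrow> real) \<Rightarrow> (real \<times> real) set \<Rightarrow> real \<times> real \<Rightarrow> bool" where
  "max_attained_at f S x \<longleftrightarrow> x \<in> S \<and> (\<forall>y\<in>S. f y \<le> f x)"

end

theory Submission
  imports Defs
begin

text \<open>
Write c = a^2, G0 = b^2 and K(w) = 1 - (1 - w) tau / t. At fixed w the integrand depends on
(tau, p) only through the deflated price x = p / K(w): it is max (min (1 - c / (w x)) (1 - x / G0)) 0,
which increases in x up to the peak w x^2 = c G0, decreases beyond it, and vanishes when w G0 <= c.
On the closure of each region, the defining inequalities place the deflated price of the claimed
optimum, for every w with w G0 > c, between the peak and the deflated price of any other point.
So the optimum dominates the integrand pointwise, hence the area. Each optimum is a boundary point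
of its region, reached by an explicit curve inside the region.
\<close>

definition coop_integrand :: "real \<Rightarrow> real \<Rightarrow> real \<Rightarrow> real \<Rightarrow> real \<Rightarrow> real \<Rightarrow> real" where
  "coop_integrand c G t tau p w = max (min (d_s c t w tau p) (d_c G t w tau p)) 0"

definition coop_profile :: "real \<Rightarrow> real \<Rightarrow> real \<Rightarrow> real \<Rightarrow> real" where
  "coop_profile c G w x = min (1 - c / (w * x)) (1 - x / G)"

lemma coop_area_eq_integral: "coop_area c G t (tau, p) = integral {0..1} (coop_integrand c G t tau p)"
  by (simp add: coop_area_def coop_integrand_def[abs_def])

lemma coop_integrand_eq_profile:
  "coop_integrand c G t tau p w = max (coop_profile c G w (p / Kw t tau w)) 0"
  by (cases "Kw t tau w = 0") (simp_all add: coop_integrand_def coop_profile_def d_s_def d_c_def field_simps)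

lemma Kw_pos:
  assumes "0 < t" "0 \<le> tau" "tau < t" "0 \<le> w"
  shows "0 < Kw t tau w"
proof -
  have "(1 - w) * tau < t"
  proof (cases "w \<le> 1")
    case True
    then have "(1 - w) * tau \<le> tau" using assms by (simp add: mult_left_le_one_le)
    then show ?thesis using assms by linarith
  next
    case False
    then show ?thesis using assms by (smt (verit) mult_nonpos_nonneg)
  qed
  then show ?thesis using assms by (simp add: Kw_def field_simps)
qed

lemma coop_profile_nonpos:
  assumes "0 < G" "0 < w" "0 < x" "w * G \<le> c"
  shows "coop_profile c G w x \<le> 0"
proof (cases "G \<le> x")
  case True
  then show ?thesis using assms by (simp add: coop_profile_def min_le_iff_disj le_divide_eq)
next
  case False
  then have "w * x \<le> c" using assms by (smt (verit) mult_strict_left_mono)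
  then show ?thesis using assms by (simp add: coop_profile_def min_le_iff_disj le_divide_eq)
qed

lemma coop_profile_mono_below_peak:
  assumes "0 < c" "0 < G" "0 < w" "0 < x" "x \<le> x0" "w * x0\<^sup>2 \<le> c * G"
  shows "coop_profile c G w x \<le> coop_profile c G w x0"
proof -
  have "x0 / G \<le> c / (w * x0)" using assms by (simp add: field_simps power2_eq_square)
  moreover have "c / (w * x0) \<le> c / (w * x)" using assms by (intro divide_left_mono) auto
  ultimately show ?thesis by (simp add: coop_profile_def)
qed

lemma coop_profile_antimono_above_peak:
  assumes "0 < c" "0 < G" "0 < w" "0 < x0" "x0 \<le> x" "c * G \<le> w * x0\<^sup>2"
  shows "coop_profile c G w x \<le> coop_profile c G w x0"
proof -
  have "c / (w * x0) \<le> x0 / G" using assms by (simp add: field_simps power2_eq_square)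
  moreover have "x0 / G \<le> x / G" using assms by (simp add: divide_right_mono)
  ultimately show ?thesis by (simp add: coop_profile_def)
qed

lemma coop_integrand_eq_0:
  assumes "0 < G" "0 < t" "0 \<le> tau" "tau < t" "0 < p" "0 < w" "w * G \<le> c"
  shows "coop_integrand c G t tau p w = 0"
  using coop_profile_nonpos[of G w "p / Kw t tau w" c] Kw_pos[of t tau w] assms
  by (simp add: coop_integrand_eq_profile)

text \<open>
At w = 0 the integrand is a junk value (d_s divides by zero). Since the integrand vanishes on
(0, c/G], evaluating it at max w (c/G) changes nothing on (0, 1] and makes it continuous.
\<close>

lemma coop_area_eq_integral_regularized:
  assumes "0 < c" "0 < G" "0 < t" "0 \<le> tau" "tau < t" "0 < p"
  shows "coop_area c G t (tau, p) = integral {0..1} (\<lambda>w. coop_integrand c G t tau p (max w (c / G)))"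
  unfolding coop_area_eq_integral
proof (rule integral_spike[of "{0}"])
  fix w :: real assume "w \<in> {0..1} - {0}"
  then have "0 < w" by auto
  show "coop_integrand c G t tau p (max w (c / G)) = coop_integrand c G t tau p w"
  proof (cases "w \<le> c / G")
    case True
    then show ?thesis
      using coop_integrand_eq_0[of G t tau p w c] coop_integrand_eq_0[of G t tau p "c / G" c]
        \<open>0 < w\<close> assms by (simp add: pos_le_divide_eq)
  qed simp
qed simp

lemma continuous_on_coop_integrand_regularized:
  assumes "0 < c" "0 < G" "0 < t" "0 \<le> tau" "tau < t" "0 < p"
  shows "continuous_on {0..1} (\<lambda>w. coop_integrand c G t tau p (max w (c / G)))"
proof -
  have "0 < max w (c / G)" for w using assms by (simp add: less_max_iff_disj)
  then have "max w (c / G) * p \<noteq> 0" for w using assms by (metis mult_pos_pos less_irrefl)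
  moreover have "G * Kw t tau (max w (c / G)) \<noteq> 0" for w
    using Kw_pos[of t tau "max w (c / G)"] assms by (simp add: le_max_iff_disj)
  ultimately show ?thesis
    unfolding coop_integrand_def d_s_def d_c_def Kw_def
    by (intro continuous_intros) simp_all
qed

lemma coop_area_le:
  assumes "0 < c" "c \<le> G" "0 < t"
    and "0 \<le> tau" "tau < t" "0 < p" "0 \<le> tau0" "tau0 < t" "0 < p0"
    and "\<And>w. 0 < w \<Longrightarrow> w \<le> 1 \<Longrightarrow> coop_integrand c G t tau p w \<le> coop_integrand c G t tau0 p0 w"
  shows "coop_area c G t (tau, p) \<le> coop_area c G t (tau0, p0)"
proof -
  have G: "0 < G" using assms by linarith
  have cG: "0 < c / G" "c / G \<le> 1" using assms G by auto
  show ?thesis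
    unfolding coop_area_eq_integral_regularized[OF assms(1) G assms(3-6)]
      coop_area_eq_integral_regularized[OF assms(1) G assms(3) assms(7-9)]
  proof (rule integral_le)
    show "(\<lambda>w. coop_integrand c G t tau p (max w (c / G))) integrable_on {0..1}"
      "(\<lambda>w. coop_integrand c G t tau0 p0 (max w (c / G))) integrable_on {0..1}"
      using assms G by (simp_all add: integrable_continuous_interval continuous_on_coop_integrand_regularized)
  next
    fix w :: real assume "w \<in> {0..1}"
    then show "coop_integrand c G t tau p (max w (c / G)) \<le> coop_integrand c G t tau0 p0 (max w (c / G))"
      using assms(10) cG by simp
  qed
qed

lemma coop_profile_le_region_II:
  fixes a b s p w :: real
  assumes "0 < a" "a < b" "0 \<le> s" "s \<le> 1/2" "0 < p" "p \<le> a * b" "0 < w" "w \<le> 1"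
  shows "coop_profile (a\<^sup>2) (b\<^sup>2) w (p / (1 - (1 - w) * s))
       \<le> coop_profile (a\<^sup>2) (b\<^sup>2) w (a * b / (1 - (1 - w) / 2))"
proof -
  define K0 where "K0 = 1 - (1 - w) / 2"
  have "(1 - w) * s \<le> (1 - w) * (1/2)" using assms by (intro mult_left_mono) auto
  then have K: "0 < K0" "K0 \<le> 1 - (1 - w) * s" using assms by (auto simp: K0_def)
  have "K0\<^sup>2 - w = ((1 - w) / 2)\<^sup>2" by (simp add: K0_def power2_eq_square field_simps)
  then have "w \<le> K0\<^sup>2" by (smt (verit) zero_le_power2)
  then have "w * (a * b)\<^sup>2 \<le> K0\<^sup>2 * (a * b)\<^sup>2" by (rule mult_right_mono) simp
  then have peak: "w * (a * b / K0)\<^sup>2 \<le> a\<^sup>2 * b\<^sup>2"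
    using K by (simp add: power_divide field_simps power_mult_distrib)
  have "p / (1 - (1 - w) * s) \<le> a * b / K0" using assms K by (intro frac_le) auto
  then show ?thesis unfolding K0_def[symmetric] using assms K peak
    by (intro coop_profile_mono_below_peak) auto
qed

lemma deflated_price_le_optimum_III:
  fixes a b s p w :: real
  assumes "0 < a" "b\<^sup>2 / (b\<^sup>2 + a\<^sup>2) \<le> s" "p \<le> b\<^sup>2 - s * (b\<^sup>2 - a\<^sup>2)" "a\<^sup>2 \<le> w * b\<^sup>2"
  shows "p * (a\<^sup>2 + b\<^sup>2 * w) \<le> 2 * a\<^sup>2 * b\<^sup>2 * (1 - (1 - w) * s)"
proof -
  define S where "S = b\<^sup>2 + a\<^sup>2"
  have "0 < S" using assms by (simp add: S_def add_nonneg_pos)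
  then have "S * s - b\<^sup>2 \<ge> 0" using assms by (simp add: S_def field_simps)
  moreover have "w * b\<^sup>2 - a\<^sup>2 \<ge> 0" using assms by simp
  moreover have "2 * a\<^sup>2 * b\<^sup>2 * (1 - (1 - w) * s) - (b\<^sup>2 - s * (b\<^sup>2 - a\<^sup>2)) * (a\<^sup>2 + b\<^sup>2 * w)
      = (S * s - b\<^sup>2) * (w * b\<^sup>2 - a\<^sup>2)"
    by (simp add: S_def algebra_simps)
  ultimately have "(b\<^sup>2 - s * (b\<^sup>2 - a\<^sup>2)) * (a\<^sup>2 + b\<^sup>2 * w) \<le> 2 * a\<^sup>2 * b\<^sup>2 * (1 - (1 - w) * s)"
    by (smt (verit) mult_nonneg_nonneg)
  moreover have "0 \<le> a\<^sup>2 + b\<^sup>2 * w" using assms(4) zero_le_power2[of a] by (simp only: mult.commute)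
  then have "p * (a\<^sup>2 + b\<^sup>2 * w) \<le> (b\<^sup>2 - s * (b\<^sup>2 - a\<^sup>2)) * (a\<^sup>2 + b\<^sup>2 * w)"
    using assms by (intro mult_right_mono)
  ultimately show ?thesis by linarith
qed

lemma coop_profile_le_region_III:
  fixes a b s p w :: real
  assumes "0 < a" "a < b" "b\<^sup>2 / (b\<^sup>2 + a\<^sup>2) \<le> s" "s < 1"
    and "0 < p" "p \<le> b\<^sup>2 - s * (b\<^sup>2 - a\<^sup>2)" "0 < w" "w \<le> 1"
  shows "max (coop_profile (a\<^sup>2) (b\<^sup>2) w (p / (1 - (1 - w) * s))) 0
       \<le> max (coop_profile (a\<^sup>2) (b\<^sup>2) w
             (2 * b\<^sup>2 * a\<^sup>2 / (b\<^sup>2 + a\<^sup>2) / (1 - (1 - w) * (b\<^sup>2 / (b\<^sup>2 + a\<^sup>2))))) 0"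
proof -
  define K where "K = 1 - (1 - w) * s"
  have "(1 - w) * s \<le> 1 - w" using assms by (simp add: mult_left_le)
  then have "0 < K" using assms by (simp add: K_def)
  show ?thesis
  proof (cases "w * b\<^sup>2 \<le> a\<^sup>2")
    case True
    then show ?thesis
      using coop_profile_nonpos[of "b\<^sup>2" w "p / K" "a\<^sup>2"] assms \<open>0 < K\<close> by (simp add: K_def)
  next
    case False
    define S where "S = b\<^sup>2 + a\<^sup>2"
    define D where "D = a\<^sup>2 + b\<^sup>2 * w"
    have "0 < S" using assms by (simp add: S_def add_pos_pos)
    have "0 < D" using assms by (simp add: D_def add_pos_nonneg)
    have x0: "2 * b\<^sup>2 * a\<^sup>2 / S / (1 - (1 - w) * (b\<^sup>2 / S)) = 2 * a\<^sup>2 * b\<^sup>2 / D"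
    proof -
      have "(1 - w) * (b\<^sup>2 / S) = (S - D) / S" by (simp add: S_def D_def algebra_simps)
      also have "\<dots> = 1 - D / S" using \<open>0 < S\<close> by (simp add: diff_divide_distrib)
      finally show ?thesis using \<open>0 < S\<close> by simp
    qed
    have "p * D \<le> 2 * a\<^sup>2 * b\<^sup>2 * K"
      using deflated_price_le_optimum_III[of a b s p w] assms False by (simp add: D_def K_def)
    then have below: "p / K \<le> 2 * a\<^sup>2 * b\<^sup>2 / D"
      using \<open>0 < K\<close> \<open>0 < D\<close> by (simp add: field_simps)
    have "4 * a\<^sup>2 * b\<^sup>2 * w \<le> D\<^sup>2"
      using zero_le_power2[of "a\<^sup>2 - b\<^sup>2 * w"] by (simp add: D_def power2_eq_square algebra_simps)
    then have peak: "w * (2 * a\<^sup>2 * b\<^sup>2 / D)\<^sup>2 \<le> a\<^sup>2 * b\<^sup>2"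
      using \<open>0 < D\<close> assms by (simp add: power_divide field_simps power2_eq_square)
    show ?thesis unfolding S_def[symmetric] x0 K_def[symmetric]
      using coop_profile_mono_below_peak[OF _ _ _ _ below peak] assms \<open>0 < K\<close> \<open>0 < D\<close>
      by (simp add: max.mono)
  qed
qed

lemma optimum_VII_le_deflated_price:
  fixes a b s p w :: real
  assumes "0 < a" "0 < b" "a * b \<le> p" "b\<^sup>2 - s * (b\<^sup>2 - a\<^sup>2) \<le> p" "w \<le> 1" "a\<^sup>2 \<le> w * b\<^sup>2"
  shows "a * b * (a + b) * (1 - (1 - w) * s) \<le> p * (a + b * w)"
proof -
  define K where "K = 1 - (1 - w) * s"
  have "0 \<le> w * b\<^sup>2" using assms(6) zero_le_power2[of a] by linarith
  then have "0 \<le> w" using assms by (simp add: zero_le_mult_iff)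
  then have "0 \<le> a + b * w" using assms by simp
  show ?thesis
  proof (cases "s \<le> b / (a + b)")
    case True
    then have "b - (a + b) * s \<ge> 0" using assms by (simp add: field_simps)
    moreover have "w * b\<^sup>2 - a\<^sup>2 \<ge> 0" using assms by simp
    moreover have "(b\<^sup>2 - s * (b\<^sup>2 - a\<^sup>2)) * (a + b * w) - a * b * (a + b) * K
        = (b - (a + b) * s) * (w * b\<^sup>2 - a\<^sup>2)"
      by (simp add: K_def power2_eq_square algebra_simps)
    ultimately have "a * b * (a + b) * K \<le> (b\<^sup>2 - s * (b\<^sup>2 - a\<^sup>2)) * (a + b * w)"
      by (smt (verit) mult_nonneg_nonneg)
    also have "\<dots> \<le> p * (a + b * w)" using assms \<open>0 \<le> a + b * w\<close> by (intro mult_right_mono) auto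
    finally show ?thesis by (simp add: K_def)
  next
    case False
    then have "b - (a + b) * s \<le> 0" using assms by (simp add: field_simps)
    moreover have "a * b * (a + b) * K - a * b * (a + b * w) = a * b * (1 - w) * (b - (a + b) * s)"
      by (simp add: K_def algebra_simps)
    moreover have "0 \<le> a * b * (1 - w)" using assms by simp
    ultimately have "a * b * (a + b) * K \<le> a * b * (a + b * w)"
      by (smt (verit) mult_nonneg_nonpos)
    also have "\<dots> \<le> p * (a + b * w)" using assms \<open>0 \<le> a + b * w\<close> by (intro mult_right_mono) auto
    finally show ?thesis by (simp add: K_def)
  qed
qed

lemma coop_profile_le_region_VII:
  fixes a b s p w :: real
  assumes "0 < a" "a < b" "0 \<le> s" "s < 1"
    and "a * b \<le> p" "b\<^sup>2 - s * (b\<^sup>2 - a\<^sup>2) \<le> p" "0 < w" "w \<le> 1"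
  shows "max (coop_profile (a\<^sup>2) (b\<^sup>2) w (p / (1 - (1 - w) * s))) 0
       \<le> max (coop_profile (a\<^sup>2) (b\<^sup>2) w (a * b / (1 - (1 - w) * (b / (a + b))))) 0"
proof -
  define K where "K = 1 - (1 - w) * s"
  have "(1 - w) * s \<le> 1 - w" using assms by (simp add: mult_left_le)
  then have "0 < K" using assms by (simp add: K_def)
  have "0 < p" using assms by (smt (verit) mult_pos_pos)
  show ?thesis
  proof (cases "w * b\<^sup>2 \<le> a\<^sup>2")
    case True
    then show ?thesis
      using coop_profile_nonpos[of "b\<^sup>2" w "p / K" "a\<^sup>2"] assms \<open>0 < K\<close> \<open>0 < p\<close>
      by (simp add: K_def)
  next
    case False
    define D where "D = a + b * w"
    have "0 < D" using assms by (simp add: D_def add_pos_nonneg)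
    have x0: "a * b / (1 - (1 - w) * (b / (a + b))) = a * b * (a + b) / D"
    proof -
      have "0 < a + b" using assms by simp
      have "(1 - w) * (b / (a + b)) = ((a + b) - D) / (a + b)" by (simp add: D_def algebra_simps)
      also have "\<dots> = 1 - D / (a + b)" using \<open>0 < a + b\<close> by (simp add: diff_divide_distrib)
      finally show ?thesis using \<open>0 < a + b\<close> by simp
    qed
    have "a * b * (a + b) * K \<le> p * D"
      using optimum_VII_le_deflated_price[of a b p s w] assms False by (simp add: K_def D_def)
    then have above: "a * b * (a + b) / D \<le> p / K"
      using \<open>0 < K\<close> \<open>0 < D\<close> by (simp add: field_simps)
    have "w * (a + b)\<^sup>2 - D\<^sup>2 = (1 - w) * (w * b\<^sup>2 - a\<^sup>2)"
      by (simp add: D_def power2_eq_square algebra_simps)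
    moreover have "0 \<le> (1 - w) * (w * b\<^sup>2 - a\<^sup>2)" using assms False by simp
    ultimately have "a\<^sup>2 * b\<^sup>2 * D\<^sup>2 \<le> a\<^sup>2 * b\<^sup>2 * (w * (a + b)\<^sup>2)"
      by (intro mult_left_mono) auto
    moreover have "w * (a * b * (a + b) / D)\<^sup>2 = a\<^sup>2 * b\<^sup>2 * (w * (a + b)\<^sup>2) / D\<^sup>2"
      by (simp add: power_divide power_mult_distrib)
    ultimately have peak: "a\<^sup>2 * b\<^sup>2 \<le> w * (a * b * (a + b) / D)\<^sup>2"
      using \<open>0 < D\<close> by (simp add: le_divide_eq)
    have "0 < a * b * (a + b) / D" using assms \<open>0 < D\<close> by simp
    then show ?thesis unfolding x0 K_def[symmetric]
      using coop_profile_antimono_above_peak[OF _ _ _ _ above peak] assms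
      by (simp add: max.mono)
  qed
qed

lemma Lim_in_closure:
  assumes "(f \<longlongrightarrow> l) F" "F \<noteq> bot" "\<forall>\<^sub>F x in F. f x \<in> S"
  shows "l \<in> closure S"
proof (rule Lim_in_closed_set[OF closed_closure _ assms(2,1)])
  show "\<forall>\<^sub>F x in F. f x \<in> closure S"
    using assms(3) by (rule eventually_mono) (use closure_subset in auto)
qed

lemma max_attained_at_closure_in_D:
  assumes "x0 \<in> closure_in_D c G t R" "closed C" "R \<subseteq> C"
    and "\<And>tau p. (tau, p) \<in> C \<Longrightarrow> 0 < tau \<Longrightarrow> tau < t \<Longrightarrow> c < p \<Longrightarrow> p < G \<Longrightarrow> f (tau, p) \<le> f x0"
  shows "max_attained_at f (closure_in_D c G t R) x0"
  using closure_minimal[OF assms(3,2)] assms unfolding max_attained_at_def closure_in_D_def dom_D_def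
  by fastforce

lemma optimum_II_in_closure_in_D:
  fixes a b t :: real
  assumes "0 < a" "a < b" "0 < t"
  shows "(t / 2, a * b) \<in> closure_in_D (a\<^sup>2) (b\<^sup>2) t (region_II (a\<^sup>2) (b\<^sup>2) t)"
proof -
  define P where "P \<delta> = a * b * (1 - \<delta>\<^sup>2)" for \<delta> :: real
  have "a\<^sup>2 < a * b" "a * b < b\<^sup>2" using assms by (simp_all add: power2_eq_square)
  have "(t / 2, a * b) \<in> closure (region_II (a\<^sup>2) (b\<^sup>2) t)"
  proof (rule Lim_in_closure)
    show "((\<lambda>\<delta>. (t * (1/2 - \<delta>), P \<delta>)) \<longlongrightarrow> (t / 2, a * b)) (at_right 0)"
      unfolding P_def by (auto intro!: tendsto_eq_intros)
    have "(P \<longlongrightarrow> a * b) (at_right 0)" unfolding P_def by (auto intro!: tendsto_eq_intros)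
    then have "\<forall>\<^sub>F \<delta> in at_right 0. a\<^sup>2 < P \<delta>" using \<open>a\<^sup>2 < a * b\<close> by (rule order_tendstoD(1))
    moreover have "\<forall>\<^sub>F \<delta> in at_right 0. 0 < \<delta> \<and> \<delta> < (1/2 :: real)"
      by (auto simp: eventually_at_right_field intro!: exI[of _ "1/2"])
    ultimately show "\<forall>\<^sub>F \<delta> in at_right 0. (t * (1/2 - \<delta>), P \<delta>) \<in> region_II (a\<^sup>2) (b\<^sup>2) t"
    proof eventually_elim
      case (elim \<delta>)
      define s where "s = 1/2 - \<delta>"
      have "0 < \<delta>\<^sup>2" "\<delta>\<^sup>2 < 1" using elim by (simp_all add: power_less_one_iff)
      then have "P \<delta> < a * b" using assms by (simp add: P_def)
      moreover have "a * b < b\<^sup>2 * (1 - s) + a\<^sup>2 * s"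
      proof -
        have "b\<^sup>2 * (1 - s) + a\<^sup>2 * s - a * b = (b - a)\<^sup>2 / 2 + \<delta> * (b\<^sup>2 - a\<^sup>2)"
          by (simp add: s_def power2_eq_square field_simps)
        moreover have "0 < (b - a)\<^sup>2 / 2" "0 < \<delta> * (b\<^sup>2 - a\<^sup>2)"
          using assms elim by (simp_all add: power_strict_mono)
        ultimately show ?thesis by linarith
      qed
      moreover have "4 * a\<^sup>2 * b\<^sup>2 * s * (1 - s) \<le> (P \<delta>)\<^sup>2"
      proof -
        have "(P \<delta>)\<^sup>2 - 4 * a\<^sup>2 * b\<^sup>2 * s * (1 - s) = a\<^sup>2 * b\<^sup>2 * (2 * \<delta>\<^sup>2 + \<delta>\<^sup>2 * \<delta>\<^sup>2)"
          by (simp add: P_def s_def power2_eq_square algebra_simps)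
        then show ?thesis by (smt (verit) zero_le_power2 mult_nonneg_nonneg)
      qed
      moreover have "t * s / t = s" "0 < t * s" "t * s < t" "s < 1/2" using elim assms by (auto simp: s_def)
      moreover have "sqrt (a\<^sup>2 * b\<^sup>2) = a * b" using assms by (simp add: real_sqrt_mult)
      ultimately show ?case using elim \<open>a * b < b\<^sup>2\<close> unfolding s_def[symmetric]
        by (simp add: region_II_def dom_D_def ac_simps)
    qed
  qed simp
  moreover have "(t / 2, a * b) \<in> dom_D (a\<^sup>2) (b\<^sup>2) t"
    using assms \<open>a\<^sup>2 < a * b\<close> \<open>a * b < b\<^sup>2\<close> by (simp add: dom_D_def)
  ultimately show ?thesis by (simp add: closure_in_D_def)
qed

text \<open>
The parabola below touches the boundary p^2 = 4 a^2 b^2 s (1 - s) of region III at the optimum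
s = b^2 / (b^2 + a^2), where it takes the value 2 a^2 b^2 / (b^2 + a^2); the optimum is approached
along it from inside the region.
\<close>

lemma discriminant_le_sq_tangent_parabola:
  fixes a b s :: real
  assumes "0 < a" "0 \<le> s" "s \<le> 1"
  shows "4 * a\<^sup>2 * b\<^sup>2 * s * (1 - s)
    \<le> (b\<^sup>2 * (1 - s) + a\<^sup>2 * s - (s * (b\<^sup>2 + a\<^sup>2) - b\<^sup>2)\<^sup>2 / (2 * (b\<^sup>2 + a\<^sup>2)))\<^sup>2"
proof -
  define S where "S = b\<^sup>2 + a\<^sup>2"
  define L where "L = b\<^sup>2 * (1 - s) + a\<^sup>2 * s"
  define d where "d = s * S - b\<^sup>2"
  have "0 < S" using assms by (simp add: S_def add_nonneg_pos)
  have "a\<^sup>2 * s \<le> a\<^sup>2" "b\<^sup>2 * (1 - s) \<le> b\<^sup>2" using assms by (simp_all add: mult_left_le)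
  then have "L \<le> S" by (simp add: L_def S_def)
  have "L\<^sup>2 - 4 * a\<^sup>2 * b\<^sup>2 * s * (1 - s) = d\<^sup>2"
    by (simp add: L_def S_def d_def power2_eq_square algebra_simps)
  moreover have "(L - d\<^sup>2 / (2 * S))\<^sup>2 = L\<^sup>2 - d\<^sup>2 * L / S + (d\<^sup>2 / (2 * S))\<^sup>2"
    using \<open>0 < S\<close> by (simp add: power2_eq_square field_simps)
  moreover have "d\<^sup>2 * L / S \<le> d\<^sup>2"
    using \<open>0 < S\<close> \<open>L \<le> S\<close> by (simp add: divide_le_eq mult_left_mono)
  ultimately show ?thesis unfolding S_def[symmetric] L_def[symmetric] d_def[symmetric]
    by (smt (verit) zero_le_power2)
qed

lemma optimum_III_in_closure_in_D:
  fixes a b t :: real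
  assumes "0 < a" "a < b" "0 < t"
  shows "(b\<^sup>2 / (b\<^sup>2 + a\<^sup>2) * t, 2 * b\<^sup>2 * a\<^sup>2 / (b\<^sup>2 + a\<^sup>2))
           \<in> closure_in_D (a\<^sup>2) (b\<^sup>2) t (region_III (a\<^sup>2) (b\<^sup>2) t)"
proof -
  define S where "S = b\<^sup>2 + a\<^sup>2"
  define s0 where "s0 = b\<^sup>2 / S"
  define p0 where "p0 = 2 * b\<^sup>2 * a\<^sup>2 / S"
  define L where "L s = b\<^sup>2 * (1 - s) + a\<^sup>2 * s" for s
  define Q where "Q s = L s - (s * S - b\<^sup>2)\<^sup>2 / (2 * S)" for s
  have "0 < S" using assms by (simp add: S_def add_pos_pos)
  have "0 < s0" "s0 < 1" "s0 * S = b\<^sup>2" using \<open>0 < S\<close> assms by (simp_all add: s0_def S_def)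
  have "L s0 * S = b\<^sup>2 * S - (s0 * S) * (b\<^sup>2 - a\<^sup>2)" by (simp add: L_def algebra_simps)
  also have "\<dots> = 2 * b\<^sup>2 * a\<^sup>2" unfolding \<open>s0 * S = b\<^sup>2\<close> by (simp add: S_def algebra_simps)
  finally have "Q s0 = p0" using \<open>0 < S\<close> \<open>s0 * S = b\<^sup>2\<close> by (simp add: Q_def p0_def eq_divide_eq)
  have "a\<^sup>2 < p0" "p0 < a * b" "a * b < b\<^sup>2"
  proof -
    have "a\<^sup>2 < b\<^sup>2" using assms by (simp add: power_strict_mono)
    then have "a\<^sup>2 * S < 2 * b\<^sup>2 * a\<^sup>2" using assms by (simp add: S_def power2_eq_square algebra_simps)
    then show "a\<^sup>2 < p0" using \<open>0 < S\<close> by (simp add: p0_def field_simps)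
    have "0 < a * b * (b - a)\<^sup>2" using assms by simp
    then have "2 * b\<^sup>2 * a\<^sup>2 < a * b * S" by (simp add: S_def power2_eq_square algebra_simps)
    then show "p0 < a * b" using \<open>0 < S\<close> by (simp add: p0_def field_simps)
    show "a * b < b\<^sup>2" using assms by (simp add: power2_eq_square)
  qed
  have "(t * s0, Q s0) \<in> closure (region_III (a\<^sup>2) (b\<^sup>2) t)"
  proof (rule Lim_in_closure)
    have "(Q \<longlongrightarrow> Q s0) (at_right s0)"
      unfolding Q_def L_def using \<open>0 < S\<close> by (auto intro!: tendsto_eq_intros)
    then show "((\<lambda>s. (t * s, Q s)) \<longlongrightarrow> (t * s0, Q s0)) (at_right s0)"
      by (auto intro!: tendsto_eq_intros)
    have "\<forall>\<^sub>F s in at_right s0. a\<^sup>2 < Q s" "\<forall>\<^sub>F s in at_right s0. Q s < a * b"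
      using \<open>(Q \<longlongrightarrow> Q s0) (at_right s0)\<close> \<open>a\<^sup>2 < p0\<close> \<open>p0 < a * b\<close> \<open>Q s0 = p0\<close>
      by (auto dest: order_tendstoD)
    moreover have "\<forall>\<^sub>F s in at_right s0. s0 < s \<and> s < 1"
      using \<open>s0 < 1\<close> by (auto simp: eventually_at_right_field intro!: exI[of _ 1])
    ultimately show "\<forall>\<^sub>F s in at_right s0. (t * s, Q s) \<in> region_III (a\<^sup>2) (b\<^sup>2) t"
    proof eventually_elim
      case (elim s)
      have "4 * a\<^sup>2 * b\<^sup>2 * s * (1 - s) \<le> (Q s)\<^sup>2"
        using discriminant_le_sq_tangent_parabola[of a s b] assms elim \<open>0 < s0\<close>
        by (simp add: Q_def L_def S_def)
      moreover have "b\<^sup>2 < s * S"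
        using elim \<open>0 < S\<close> \<open>s0 * S = b\<^sup>2\<close> mult_strict_right_mono[of s0 s S] by simp
      then have "Q s < L s" using \<open>0 < S\<close> by (simp add: Q_def)
      moreover have "b\<^sup>2 / (b\<^sup>2 + a\<^sup>2) < s" using elim by (simp add: s0_def S_def)
      moreover have "t * s / t = s" "0 < t * s" "t * s < t" using elim \<open>0 < s0\<close> assms by auto
      moreover have "sqrt (a\<^sup>2 * b\<^sup>2) = a * b" using assms by (simp add: real_sqrt_mult)
      ultimately show ?case using elim \<open>a * b < b\<^sup>2\<close> by (simp add: region_III_def dom_D_def L_def)
    qed
  qed simp
  moreover have "(t * s0, p0) \<in> dom_D (a\<^sup>2) (b\<^sup>2) t"
    using assms \<open>0 < s0\<close> \<open>s0 < 1\<close> \<open>a\<^sup>2 < p0\<close> \<open>p0 < a * b\<close> \<open>a * b < b\<^sup>2\<close>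
    by (simp add: dom_D_def)
  ultimately show ?thesis using \<open>Q s0 = p0\<close> by (simp add: closure_in_D_def s0_def p0_def S_def mult.commute)
qed

lemma optimum_VII_in_closure_in_D:
  fixes a b t :: real
  assumes "0 < a" "a < b" "0 < t"
  shows "(b / (a + b) * t, a * b) \<in> closure_in_D (a\<^sup>2) (b\<^sup>2) t (region_VII (a\<^sup>2) (b\<^sup>2) t)"
proof -
  define s0 where "s0 = b / (a + b)"
  have "0 < s0" "s0 < 1" using assms by (simp_all add: s0_def)
  have "a\<^sup>2 < a * b" "a * b < b\<^sup>2" using assms by (simp_all add: power2_eq_square)
  have "(s0 * t, a * b) \<in> closure (region_VII (a\<^sup>2) (b\<^sup>2) t)"
  proof (rule Lim_in_closure)
    show "((\<lambda>\<delta>. (s0 * t, a * b + \<delta>)) \<longlongrightarrow> (s0 * t, a * b)) (at_right 0)"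
      by (auto intro!: tendsto_eq_intros)
    have "\<forall>\<^sub>F \<delta> in at_right 0. 0 < \<delta> \<and> a * b + \<delta> < b\<^sup>2"
      using \<open>a * b < b\<^sup>2\<close> by (auto simp: eventually_at_right_field intro!: exI[of _ "b\<^sup>2 - a * b"])
    then show "\<forall>\<^sub>F \<delta> in at_right 0. (s0 * t, a * b + \<delta>) \<in> region_VII (a\<^sup>2) (b\<^sup>2) t"
    proof eventually_elim
      case (elim \<delta>)
      have "s0 * (a + b) = b" "(1 - s0) * (a + b) = a" using assms by (simp_all add: s0_def field_simps)
      then have "(b\<^sup>2 * (1 - s0) + a\<^sup>2 * s0) * (a + b) = a * b * (a + b)"
        by (simp add: power2_eq_square algebra_simps)
      then have "b\<^sup>2 * (1 - s0) + a\<^sup>2 * s0 = a * b" using assms by simp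
      have "4 * s0 * (1 - s0) \<le> 1"
        using zero_le_power2[of "2 * s0 - 1"] by (simp add: power2_eq_square algebra_simps)
      then have "4 * a\<^sup>2 * b\<^sup>2 * s0 * (1 - s0) \<le> (a * b)\<^sup>2"
        using mult_left_mono[of "4 * s0 * (1 - s0)" 1 "(a * b)\<^sup>2"]
        by (simp add: power_mult_distrib algebra_simps)
      also have "\<dots> \<le> (a * b + \<delta>)\<^sup>2" using assms elim by (intro power_mono) auto
      finally have "4 * a\<^sup>2 * b\<^sup>2 * s0 * (1 - s0) \<le> (a * b + \<delta>)\<^sup>2" .
      moreover have "s0 * t / t = s0" "0 < s0 * t" "s0 * t < t"
        using assms \<open>0 < s0\<close> \<open>s0 < 1\<close> by auto
      moreover have "sqrt (a\<^sup>2 * b\<^sup>2) = a * b" using assms by (simp add: real_sqrt_mult)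
      ultimately show ?case using elim \<open>a\<^sup>2 < a * b\<close> \<open>b\<^sup>2 * (1 - s0) + a\<^sup>2 * s0 = a * b\<close>
        by (simp add: region_VII_def dom_D_def)
    qed
  qed simp
  moreover have "(s0 * t, a * b) \<in> dom_D (a\<^sup>2) (b\<^sup>2) t"
    using assms \<open>0 < s0\<close> \<open>s0 < 1\<close> \<open>a\<^sup>2 < a * b\<close> \<open>a * b < b\<^sup>2\<close> by (simp add: dom_D_def)
  ultimately show ?thesis by (simp add: closure_in_D_def s0_def)
qed

lemma coop_area_max_region_II:
  fixes a b t :: real
  assumes "0 < a" "a < b" "0 < t"
  shows "max_attained_at (coop_area (a\<^sup>2) (b\<^sup>2) t)
           (closure_in_D (a\<^sup>2) (b\<^sup>2) t (region_II (a\<^sup>2) (b\<^sup>2) t)) (t / 2, a * b)"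
proof (rule max_attained_at_closure_in_D[OF optimum_II_in_closure_in_D[OF assms]])
  let ?C = "{q. snd q \<le> a * b} \<inter> {q. fst q / t \<le> 1/2}"
  show "closed ?C" using assms by (intro closed_Int closed_Collect_le continuous_intros) auto
  show "region_II (a\<^sup>2) (b\<^sup>2) t \<subseteq> ?C" using assms by (auto simp: region_II_def real_sqrt_mult)
  fix tau p assume "(tau, p) \<in> ?C" "0 < tau" "tau < t" "a\<^sup>2 < p" "p < b\<^sup>2"
  moreover have "0 < p" using \<open>a\<^sup>2 < p\<close> by (smt (verit) zero_le_power2)
  ultimately show "coop_area (a\<^sup>2) (b\<^sup>2) t (tau, p) \<le> coop_area (a\<^sup>2) (b\<^sup>2) t (t / 2, a * b)"
  proof (intro coop_area_le)
    fix w :: real assume "0 < w" "w \<le> 1"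
    with \<open>(tau, p) \<in> ?C\<close> \<open>0 < tau\<close> \<open>0 < p\<close> show "coop_integrand (a\<^sup>2) (b\<^sup>2) t tau p w
        \<le> coop_integrand (a\<^sup>2) (b\<^sup>2) t (t / 2) (a * b) w"
      using assms coop_profile_le_region_II[of a b "tau / t" p w]
      by (simp add: coop_integrand_eq_profile Kw_def max.mono)
  qed (use assms in \<open>auto simp: power_strict_mono\<close>)
qed

lemma coop_area_max_region_III:
  fixes a b t :: real
  assumes "0 < a" "a < b" "0 < t"
  shows "max_attained_at (coop_area (a\<^sup>2) (b\<^sup>2) t)
           (closure_in_D (a\<^sup>2) (b\<^sup>2) t (region_III (a\<^sup>2) (b\<^sup>2) t))
           (b\<^sup>2 / (b\<^sup>2 + a\<^sup>2) * t, 2 * b\<^sup>2 * a\<^sup>2 / (b\<^sup>2 + a\<^sup>2))"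
proof (rule max_attained_at_closure_in_D[OF optimum_III_in_closure_in_D[OF assms]])
  define s0 where "s0 = b\<^sup>2 / (b\<^sup>2 + a\<^sup>2)"
  let ?C = "{q. s0 \<le> fst q / t} \<inter> {q. snd q \<le> b\<^sup>2 * (1 - fst q / t) + a\<^sup>2 * (fst q / t)}"
  show "closed ?C" using assms by (intro closed_Int closed_Collect_le continuous_intros) auto
  show "region_III (a\<^sup>2) (b\<^sup>2) t \<subseteq> ?C" by (auto simp: region_III_def s0_def)
  have "0 < s0" "s0 < 1" using assms by (simp_all add: s0_def add_pos_pos power_strict_mono)
  fix tau p assume "(tau, p) \<in> ?C" "0 < tau" "tau < t" "a\<^sup>2 < p" "p < b\<^sup>2"
  moreover have "0 < p" using \<open>a\<^sup>2 < p\<close> by (smt (verit) zero_le_power2)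
  ultimately show "coop_area (a\<^sup>2) (b\<^sup>2) t (tau, p) \<le> coop_area (a\<^sup>2) (b\<^sup>2) t (s0 * t, 2 * b\<^sup>2 * a\<^sup>2 / (b\<^sup>2 + a\<^sup>2))"
  proof (intro coop_area_le)
    fix w :: real assume "0 < w" "w \<le> 1"
    moreover have "p \<le> b\<^sup>2 - tau / t * (b\<^sup>2 - a\<^sup>2)" using \<open>(tau, p) \<in> ?C\<close> by (simp add: algebra_simps)
    ultimately show "coop_integrand (a\<^sup>2) (b\<^sup>2) t tau p w
        \<le> coop_integrand (a\<^sup>2) (b\<^sup>2) t (s0 * t) (2 * b\<^sup>2 * a\<^sup>2 / (b\<^sup>2 + a\<^sup>2)) w"
      using \<open>(tau, p) \<in> ?C\<close> \<open>0 < p\<close> \<open>tau < t\<close> assms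
        coop_profile_le_region_III[of a b "tau / t" p w]
      by (simp add: coop_integrand_eq_profile Kw_def s0_def)
  qed (use assms \<open>0 < s0\<close> \<open>s0 < 1\<close> in \<open>auto simp: add_pos_pos\<close>)
qed

lemma coop_area_max_region_VII:
  fixes a b t :: real
  assumes "0 < a" "a < b" "0 < t"
  shows "max_attained_at (coop_area (a\<^sup>2) (b\<^sup>2) t)
           (closure_in_D (a\<^sup>2) (b\<^sup>2) t (region_VII (a\<^sup>2) (b\<^sup>2) t)) (b / (a + b) * t, a * b)"
proof (rule max_attained_at_closure_in_D[OF optimum_VII_in_closure_in_D[OF assms]])
  let ?C = "{q. a * b \<le> snd q} \<inter> {q. b\<^sup>2 * (1 - fst q / t) + a\<^sup>2 * (fst q / t) \<le> snd q}"
  show "closed ?C" using assms by (intro closed_Int closed_Collect_le continuous_intros) auto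
  show "region_VII (a\<^sup>2) (b\<^sup>2) t \<subseteq> ?C" using assms by (auto simp: region_VII_def real_sqrt_mult)
  have "0 < b / (a + b) * t" "b / (a + b) * t < t" using assms by (simp_all add: field_simps)
  fix tau p assume "(tau, p) \<in> ?C" "0 < tau" "tau < t" "a\<^sup>2 < p" "p < b\<^sup>2"
  moreover have "0 < p" using \<open>a\<^sup>2 < p\<close> by (smt (verit) zero_le_power2)
  ultimately show "coop_area (a\<^sup>2) (b\<^sup>2) t (tau, p) \<le> coop_area (a\<^sup>2) (b\<^sup>2) t (b / (a + b) * t, a * b)"
  proof (intro coop_area_le)
    fix w :: real assume "0 < w" "w \<le> 1"
    moreover have "b\<^sup>2 - tau / t * (b\<^sup>2 - a\<^sup>2) \<le> p" using \<open>(tau, p) \<in> ?C\<close> by (simp add: algebra_simps)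
    ultimately show "coop_integrand (a\<^sup>2) (b\<^sup>2) t tau p w \<le> coop_integrand (a\<^sup>2) (b\<^sup>2) t (b / (a + b) * t) (a * b) w"
      using \<open>(tau, p) \<in> ?C\<close> \<open>0 < tau\<close> \<open>tau < t\<close> assms
        coop_profile_le_region_VII[of a b "tau / t" p w]
      by (simp add: coop_integrand_eq_profile Kw_def)
  qed (use assms \<open>0 < b / (a + b) * t\<close> \<open>b / (a + b) * t < t\<close> in \<open>auto simp: power_strict_mono\<close>)
qed

theorem proposition2:
  fixes c G0 t :: real
  assumes "0 < c" "c < G0" "0 < t"
  shows "max_attained_at (coop_area c G0 t) (closure_in_D c G0 t (region_II c G0 t))
           (t / 2, sqrt (c * G0))
       \<and> max_attained_at (coop_area c G0 t) (closure_in_D c G0 t (region_III c G0 t))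
           (G0 / (G0 + c) * t, 2 * G0 * c / (G0 + c))
       \<and> max_attained_at (coop_area c G0 t) (closure_in_D c G0 t (region_VII c G0 t))
           ((G0 - sqrt (c * G0)) / (G0 - c) * t, sqrt (c * G0))"
proof -
  define a where "a = sqrt c"
  define b where "b = sqrt G0"
  have "0 < a" "a < b" using assms by (simp_all add: a_def b_def)
  have c: "c = a\<^sup>2" and G0: "G0 = b\<^sup>2" using assms by (simp_all add: a_def b_def)
  have sqrt: "sqrt (c * G0) = a * b" by (simp add: a_def b_def real_sqrt_mult)
  have "(G0 - a * b) / (G0 - c) = ((b - a) * b) / ((b - a) * (a + b))"
    by (simp add: c G0 power2_eq_square algebra_simps)
  then have "(G0 - a * b) / (G0 - c) = b / (a + b)" using \<open>a < b\<close> by simp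
  then show ?thesis unfolding sqrt
    using coop_area_max_region_II[OF \<open>0 < a\<close> \<open>a < b\<close> assms(3)]
      coop_area_max_region_III[OF \<open>0 < a\<close> \<open>a < b\<close> assms(3)]
      coop_area_max_region_VII[OF \<open>0 < a\<close> \<open>a < b\<close> assms(3)]
    by (simp add: c G0)
qed

end
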